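(* Let $(\mathbb X,S)$ be a minimal subshift over a finite alphabet $\mathcal A$ satisfying the Boshernitzan condition, and let $m\in\mathbb N$. Then each $S^m$-minimal component $\mathbb X_j$ of $\mathbb X$, viewed via the conjugacy $x\mapsto (x_{[km,(k+1)m-1]})_{k\in\mathbb Z}$ as a subshift (with the left shift, corresponding to $S^m$) over the alphabet $\mathcal L_m(\mathbb X)$, satisfies the Boshernitzan condition.
   Context: $\mathcal L_m(\mathbb X)$ is the set of words of length $m$ occurring in elements of $\mathbb X$, and $x_{[j,k]}=x_j\cdots x_k$. An $S^m$-minimal component is a nonempty closed $S^m$-invariant subset minimal with these properties. Boshernitzan condition for a minimal subshift $\mathbb Y$: there is a shift-invariant probability measure $\nu$ with $\limsup_{n}n\min\{\nu[u]:u\in\mathcal L_n(\mathbb Y)\}>0$, where $[u]$ is the cylinder set of $u$ at position $0$. *)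

theory Defs
  imports "HOL-Probability.Probability"
begin

definition shift :: "(int \<Rightarrow> 'b) \<Rightarrow> (int \<Rightarrow> 'b)" where
  "shift x = (\<lambda>i. x (i + 1))"

definition full_shift_top :: "'b set \<Rightarrow> (int \<Rightarrow> 'b) topology" where
  "full_shift_top A = product_topology (\<lambda>_. discrete_topology A) UNIV"

definition borel_of_top :: "'c topology \<Rightarrow> 'c measure" where
  "borel_of_top T = sigma (topspace T) {U. openin T U}"

definition closed_invariant :: "'b set \<Rightarrow> ((int \<Rightarrow> 'b) \<Rightarrow> (int \<Rightarrow> 'b)) \<Rightarrow> (int \<Rightarrow> 'b) set \<Rightarrow> bool" where
  "closed_invariant A f Z \<longleftrightarrow> closedin (full_shift_top A) Z \<and> f ` Z = Z"

definition subshift :: "'b set \<Rightarrow> (int \<Rightarrow> 'b) set \<Rightarrow> bool" where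
  "subshift A X \<longleftrightarrow> finite A \<and> closed_invariant A shift X"

definition minimal_component :: "'b set \<Rightarrow> ((int \<Rightarrow> 'b) \<Rightarrow> (int \<Rightarrow> 'b)) \<Rightarrow> (int \<Rightarrow> 'b) set \<Rightarrow> (int \<Rightarrow> 'b) set \<Rightarrow> bool" where
  "minimal_component A f X Z \<longleftrightarrow> Z \<subseteq> X \<and> Z \<noteq> {} \<and> closed_invariant A f Z \<and>
     (\<forall>W. W \<subseteq> Z \<and> W \<noteq> {} \<and> closed_invariant A f W \<longrightarrow> W = Z)"

definition minimal_subshift :: "'b set \<Rightarrow> (int \<Rightarrow> 'b) set \<Rightarrow> bool" where
  "minimal_subshift A X \<longleftrightarrow> subshift A X \<and> minimal_component A shift X X"

definition word_at :: "(int \<Rightarrow> 'b) \<Rightarrow> int \<Rightarrow> nat \<Rightarrow> 'b list" where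
  "word_at x j n = map (\<lambda>i. x (j + int i)) [0..<n]"

definition lang :: "nat \<Rightarrow> (int \<Rightarrow> 'b) set \<Rightarrow> 'b list set" where
  "lang n X = {word_at x j n | x j. x \<in> X}"

definition cylinder :: "'b list \<Rightarrow> (int \<Rightarrow> 'b) set" where
  "cylinder u = {x. \<forall>i < length u. x (int i) = u ! i}"

definition invariant_prob :: "'b set \<Rightarrow> (int \<Rightarrow> 'b) set \<Rightarrow> (int \<Rightarrow> 'b) measure \<Rightarrow> bool" where
  "invariant_prob A Y \<nu> \<longleftrightarrow> prob_space \<nu> \<and>
     space \<nu> = Y \<and>
     sets \<nu> = sets (borel_of_top (subtopology (full_shift_top A) Y)) \<and>
     (\<forall>B \<in> sets \<nu>. emeasure \<nu> (shift -` B \<inter> Y) = emeasure \<nu> B)"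

definition boshernitzan :: "'b set \<Rightarrow> (int \<Rightarrow> 'b) set \<Rightarrow> bool" where
  "boshernitzan A Y \<longleftrightarrow> (\<exists>\<nu>. invariant_prob A Y \<nu> \<and>
     limsup (\<lambda>n::nat. ereal (real n * Min {measure \<nu> (cylinder u \<inter> Y) | u. u \<in> lang n Y})) > 0)"

definition block_code :: "nat \<Rightarrow> (int \<Rightarrow> 'b) \<Rightarrow> (int \<Rightarrow> 'b list)" where
  "block_code m x = (\<lambda>k. word_at x (k * int m) m)"

end

theory Submission
  imports Defs
begin

text \<open>The translates \<open>S\<^sup>-\<^sup>i Xj\<close>, \<open>0 \<le> i < m\<close>, cover \<open>X\<close> by minimality of \<open>X\<close>, and each of them
  either equals \<open>Xj\<close> or is disjoint from it by minimality of \<open>Xj\<close>. Hence \<open>Xj\<close> is clopen in \<open>X\<close>, and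
  by compactness membership in \<open>Xj\<close> is decided by the coordinates in a fixed window \<open>[-K, K]\<close>.
  An invariant measure \<open>\<nu>\<close> gives all translates the same mass, so \<open>\<nu> Xj > 0\<close>, and the
  conditional measure \<open>\<nu>(\<cdot> | Xj)\<close> pushed forward by the block coding is shift invariant. The
  preimage in \<open>Xj\<close> of a cylinder of \<open>n\<close> blocks contains a shifted cylinder of \<open>X\<close> of any length
  \<open>L > n m + 2 K\<close>, so minimal cylinder measures compare, and the Boshernitzan bound survives with
  a loss of a factor \<open>2 m\<close>.\<close>

definition shift_by :: "int \<Rightarrow> (int \<Rightarrow> 'a) \<Rightarrow> (int \<Rightarrow> 'a)" where
  "shift_by t x = (\<lambda>i. x (i + t))"

lemma shift_by_apply [simp]: "shift_by t x i = x (i + t)"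
  by (simp add: shift_by_def)

lemma shift_by_shift_by [simp]: "shift_by s (shift_by t x) = shift_by (s + t) x"
  by (simp add: shift_by_def fun_eq_iff ac_simps)

lemma shift_by_0 [simp]: "shift_by 0 x = x"
  by (simp add: shift_by_def)

lemma shift_eq_shift_by: "shift = shift_by 1"
  by (simp add: fun_eq_iff shift_def)

lemma funpow_shift: "shift ^^ n = shift_by (int n)"
  by (induction n) (simp_all add: fun_eq_iff shift_eq_shift_by add_ac)

lemma shift_by_inverse [simp]:
  "shift_by (- t) (shift_by t x) = x" "shift_by t (shift_by (- t) x) = x"
  by simp_all

lemma inj_shift_by: "inj (shift_by t)"
  by (metis injI shift_by_inverse(1))

definition shift_invariant :: "int \<Rightarrow> (int \<Rightarrow> 'a) set \<Rightarrow> bool" where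
  "shift_invariant t Z \<longleftrightarrow> (\<forall>y. shift_by t y \<in> Z \<longleftrightarrow> y \<in> Z)"

lemma shift_invariant_iff_image: "shift_invariant t Z \<longleftrightarrow> shift_by t ` Z = Z"
proof
  assume inv: "shift_invariant t Z"
  have "z \<in> shift_by t ` Z" if "z \<in> Z" for z
  proof (rule image_eqI)
    show "z = shift_by t (shift_by (- t) z)"
      by simp
    show "shift_by (- t) z \<in> Z"
      using inv that unfolding shift_invariant_def by (metis shift_by_inverse(2))
  qed
  then show "shift_by t ` Z = Z"
    using inv unfolding shift_invariant_def by blast
next
  assume "shift_by t ` Z = Z"
  then show "shift_invariant t Z"
    unfolding shift_invariant_def using inj_shift_by[of t]
    by (metis image_eqI inj_image_mem_iff)
qed

lemma shift_invariant_add: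
  "shift_invariant s Z \<Longrightarrow> shift_invariant t Z \<Longrightarrow> shift_invariant (s + t) Z"
  unfolding shift_invariant_def by (metis shift_by_shift_by)

lemma shift_invariant_uminus: "shift_invariant t Z \<Longrightarrow> shift_invariant (- t) Z"
  unfolding shift_invariant_def by (metis shift_by_inverse(2))

lemma shift_invariant_mult:
  assumes "shift_invariant t Z"
  shows "shift_invariant (k * t) Z"
proof (induction k rule: int_induct[where k = 0])
  case (step1 i)
  then show ?case
    using shift_invariant_add[OF _ assms] by (simp add: distrib_right)
next
  case (step2 i)
  then show ?case
    using shift_invariant_add[OF _ shift_invariant_uminus[OF assms]] by (simp add: left_diff_distrib)
qed (simp add: shift_invariant_def)

lemma shift_invariant_Int:
  "shift_invariant t Z \<Longrightarrow> shift_invariant t W \<Longrightarrow> shift_invariant t (Z \<inter> W)"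
  by (simp add: shift_invariant_def)

section \<open>Topology of the full shift\<close>

lemma topspace_full_shift_top: "topspace (full_shift_top A) = {x. \<forall>i. x i \<in> A}"
  by (auto simp: full_shift_top_def PiE_UNIV_domain)

lemma continuous_map_shift_by: "continuous_map (full_shift_top A) (full_shift_top A) (shift_by t)"
  unfolding full_shift_top_def continuous_map_componentwise_UNIV
  by (auto simp: shift_by_def intro!: continuous_map_product_projection)

lemma compact_space_full_shift_top: "finite A \<Longrightarrow> compact_space (full_shift_top A)"
  by (simp add: full_shift_top_def compact_space_product_topology compact_space_discrete_topology)

lemma closedin_shift_by_vimage:
  assumes "closedin (full_shift_top A) Z"
  shows "closedin (full_shift_top A) {y. shift_by t y \<in> Z}"
proof -
  have "y \<in> topspace (full_shift_top A)" if "shift_by t y \<in> Z" for y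
  proof -
    have "shift_by t y \<in> topspace (full_shift_top A)"
      using closedin_subset[OF assms] that by blast
    then have "shift_by t y (i - t) \<in> A" for i
      unfolding topspace_full_shift_top by blast
    then show ?thesis
      by (simp add: topspace_full_shift_top)
  qed
  then have "{y. shift_by t y \<in> Z} = {y \<in> topspace (full_shift_top A). shift_by t y \<in> Z}"
    by blast
  then show ?thesis
    using closedin_continuous_map_preimage[OF continuous_map_shift_by assms] by simp
qed

lemma openin_agree_on_finite:
  assumes "finite F"
  shows "openin (full_shift_top A) {y \<in> topspace (full_shift_top A). \<forall>i\<in>F. y i = x i}"
proof -
  define U where "U i = (if i \<in> F then {x i} \<inter> A else A)" for i
  have "{i. U i \<noteq> A} \<subseteq> F"
    by (auto simp: U_def)
  then have "finite {i. U i \<noteq> A}"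
    using assms finite_subset by blast
  then have "openin (full_shift_top A) (PiE UNIV U)"
    unfolding full_shift_top_def by (subst openin_PiE_gen) (auto simp: U_def)
  moreover have "PiE UNIV U = {y \<in> topspace (full_shift_top A). \<forall>i\<in>F. y i = x i}"
    by (auto simp: U_def topspace_full_shift_top PiE_UNIV_domain Pi_iff split: if_splits) metis
  ultimately show ?thesis
    by simp
qed

lemma openin_full_shift_top_window:
  assumes "openin (full_shift_top A) S" "x \<in> S"
  obtains K :: nat where
    "\<And>y. y \<in> topspace (full_shift_top A) \<Longrightarrow> \<forall>i\<in>{- int K..int K}. y i = x i \<Longrightarrow> y \<in> S"
proof -
  obtain U where U: "finite {i. U i \<noteq> A}" "x \<in> PiE UNIV U" "PiE UNIV U \<subseteq> S"
    using assms unfolding full_shift_top_def openin_product_topology_alt by force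
  define K where "K = Max (insert 0 ((\<lambda>i. nat \<bar>i\<bar>) ` {i. U i \<noteq> A}))"
  have "y \<in> S" if y: "y \<in> topspace (full_shift_top A)" "\<forall>i\<in>{- int K..int K}. y i = x i" for y
  proof -
    have "y i \<in> U i" for i
    proof (cases "U i = A")
      case False
      then have "nat \<bar>i\<bar> \<le> K"
        unfolding K_def using U(1) by (intro Max_ge) auto
      then have "i \<in> {- int K..int K}"
        by auto
      then have "y i = x i"
        using y(2) by blast
      then show ?thesis
        using U(2) by (auto simp: PiE_UNIV_domain)
    qed (use y(1) in \<open>simp add: topspace_full_shift_top\<close>)
    then show ?thesis
      using U(3) by (auto simp: PiE_UNIV_domain)
  qed
  then show thesis
    using that by blast
qed

text \<open>Agreement windows are nested (the topology is ultrametric), so the windows of a finite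
  subcover merge into a single one.\<close>

lemma compactin_uniform_window:
  assumes "compactin (full_shift_top A) C" "openin (full_shift_top A) S" "C \<subseteq> S"
  shows "\<exists>K::nat. \<forall>x\<in>C. \<forall>y\<in>topspace (full_shift_top A).
    (\<forall>i\<in>{- int K..int K}. y i = x i) \<longrightarrow> y \<in> S"
proof -
  let ?T = "full_shift_top A"
  define nbhd where "nbhd K x = {y \<in> topspace ?T. \<forall>i\<in>{- int K..int K}. y i = x i}" for K :: nat and x
  have "\<exists>K. nbhd K x \<subseteq> S" if "x \<in> C" for x
  proof -
    have "x \<in> S"
      using that assms(3) by blast
    then obtain K where "\<And>y. y \<in> topspace ?T \<Longrightarrow> \<forall>i\<in>{- int K..int K}. y i = x i \<Longrightarrow> y \<in> S"
      using openin_full_shift_top_window[OF assms(2)] by blast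
    then show ?thesis
      unfolding nbhd_def by blast
  qed
  then obtain Kx where Kx: "\<And>x. x \<in> C \<Longrightarrow> nbhd (Kx x) x \<subseteq> S"
    by metis
  have "C \<subseteq> topspace ?T"
    using assms(1) compactin_subset_topspace by blast
  then have "C \<subseteq> \<Union>((\<lambda>x. nbhd (Kx x) x) ` C)"
    unfolding nbhd_def by auto
  moreover have "\<forall>U\<in>(\<lambda>x. nbhd (Kx x) x) ` C. openin ?T U"
    unfolding nbhd_def by (auto intro: openin_agree_on_finite)
  ultimately obtain \<F> where \<F>: "finite \<F>" "\<F> \<subseteq> (\<lambda>x. nbhd (Kx x) x) ` C" "C \<subseteq> \<Union>\<F>"
    using assms(1) unfolding compactin_def by meson
  obtain C' where C': "C' \<subseteq> C" "finite C'" "\<F> = (\<lambda>x. nbhd (Kx x) x) ` C'"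
    using finite_subset_image[OF \<F>(1,2)] by blast
  define K where "K = Max (insert 0 (Kx ` C'))"
  have "y \<in> S" if "x \<in> C" "y \<in> topspace ?T" "\<forall>i\<in>{- int K..int K}. y i = x i" for x y
  proof -
    obtain x' where x': "x' \<in> C'" "x \<in> nbhd (Kx x') x'"
      using \<F>(3) C'(3) \<open>x \<in> C\<close> by blast
    have "Kx x' \<le> K"
      unfolding K_def using C'(2) x'(1) by (intro Max_ge) auto
    then have "y \<in> nbhd (Kx x') x'"
      using that(2,3) x'(2) unfolding nbhd_def by auto
    then show ?thesis
      using Kx C'(1) x'(1) by blast
  qed
  then show ?thesis
    by blast
qed

lemma space_borel_of_top [simp]: "space (borel_of_top T) = topspace T"
  unfolding borel_of_top_def by (rule space_measure_of) (auto dest: openin_subset)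

lemma openin_in_borel_of_top: "openin T U \<Longrightarrow> U \<in> sets (borel_of_top T)"
  unfolding borel_of_top_def by (subst sets_measure_of) (auto dest: openin_subset)

lemma measurable_borel_of_top:
  assumes "sets M = sets (borel_of_top S)" "continuous_map S T f"
  shows "f \<in> measurable M (borel_of_top T)"
proof -
  have space_M: "space M = topspace S"
    using sets_eq_imp_space_eq[OF assms(1)] by simp
  have "f \<in> measurable M (sigma (topspace T) {U. openin T U})"
  proof (rule measurable_measure_of)
    show "{U. openin T U} \<subseteq> Pow (topspace T)"
      by (auto dest: openin_subset)
    show "f \<in> space M \<rightarrow> topspace T"
      using assms(2) space_M by (auto simp: continuous_map_def)
    fix U assume "U \<in> {U. openin T U}"
    then have "openin S {x \<in> topspace S. f x \<in> U}"
      using openin_continuous_map_preimage[OF assms(2)] by auto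
    moreover have "f -` U \<inter> space M = {x \<in> topspace S. f x \<in> U}"
      using space_M by auto
    ultimately show "f -` U \<inter> space M \<in> sets M"
      unfolding assms(1) by (simp add: openin_in_borel_of_top)
  qed
  then show ?thesis
    unfolding borel_of_top_def .
qed

lemma length_word_at [simp]: "length (word_at x j n) = n"
  by (simp add: word_at_def)

lemma nth_word_at [simp]: "i < n \<Longrightarrow> word_at x j n ! i = x (j + int i)"
  by (simp add: word_at_def)

lemma word_at_shift_by [simp]: "word_at (shift_by t x) j n = word_at x (j + t) n"
  by (simp add: word_at_def ac_simps)

lemma word_at_eq_iff: "word_at x j n = word_at y j n \<longleftrightarrow> (\<forall>i\<in>{j..<j + int n}. x i = y i)"
proof
  assume "word_at x j n = word_at y j n"
  then have agree: "x (j + int k) = y (j + int k)" if "k < n" for k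
    using that by (metis nth_word_at)
  show "\<forall>i\<in>{j..<j + int n}. x i = y i"
  proof
    fix i assume "i \<in> {j..<j + int n}"
    then have "nat (i - j) < n" "j + int (nat (i - j)) = i"
      by auto
    then show "x i = y i"
      using agree by metis
  qed
next
  assume "\<forall>i\<in>{j..<j + int n}. x i = y i"
  then show "word_at x j n = word_at y j n"
    by (intro nth_equalityI) auto
qed

lemma cylinder_eq_word_at: "cylinder u = {x. word_at x 0 (length u) = u}"
  unfolding cylinder_def by (auto simp: list_eq_iff_nth_eq)

lemma finite_lang:
  assumes "finite A" "Y \<subseteq> topspace (full_shift_top A)"
  shows "finite (lang n Y)"
proof (rule finite_subset)
  show "lang n Y \<subseteq> {u. set u \<subseteq> A \<and> length u = n}"
    using assms(2) unfolding lang_def word_at_def topspace_full_shift_top by (force simp: subset_iff)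
  show "finite {u. set u \<subseteq> A \<and> length u = n}"
    using finite_lists_length_eq[OF assms(1)] .
qed

lemma lang_nonempty: "Y \<noteq> {} \<Longrightarrow> lang n Y \<noteq> {}"
  unfolding lang_def by blast

lemma openin_word_at_fiber:
  "openin (full_shift_top A) {x \<in> topspace (full_shift_top A). word_at x j n = w}"
proof (cases "\<exists>x0 \<in> topspace (full_shift_top A). word_at x0 j n = w")
  case True
  then obtain x0 where "word_at x0 j n = w"
    by blast
  then have "{x \<in> topspace (full_shift_top A). word_at x j n = w}
      = {x \<in> topspace (full_shift_top A). \<forall>i\<in>{j..<j + int n}. x i = x0 i}"
    using word_at_eq_iff[of _ j n x0] by auto
  then show ?thesis
    by (simp add: openin_agree_on_finite)
next
  case False
  then have "{x \<in> topspace (full_shift_top A). word_at x j n = w} = {}"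
    by blast
  then show ?thesis
    by (simp only: openin_empty)
qed

lemma continuous_map_word_at:
  assumes "Y \<subseteq> topspace (full_shift_top A)"
  shows "continuous_map (subtopology (full_shift_top A) Y) (discrete_topology (lang n Y))
    (\<lambda>x. word_at x j n)"
  unfolding continuous_map_def
proof (intro conjI allI impI)
  show "(\<lambda>x. word_at x j n) \<in> topspace (subtopology (full_shift_top A) Y) \<rightarrow> topspace (discrete_topology (lang n Y))"
    by (auto simp: lang_def)
  fix U assume "openin (discrete_topology (lang n Y)) U"
  let ?V = "\<Union>w\<in>U. {x \<in> topspace (full_shift_top A). word_at x j n = w}"
  have "openin (full_shift_top A) ?V"
    by (intro openin_Union) (auto intro: openin_word_at_fiber)
  moreover have "{x \<in> topspace (subtopology (full_shift_top A) Y). word_at x j n \<in> U} = ?V \<inter> Y"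
    using assms by auto
  ultimately show "openin (subtopology (full_shift_top A) Y)
      {x \<in> topspace (subtopology (full_shift_top A) Y). word_at x j n \<in> U}"
    by (auto simp: openin_subtopology)
qed

lemma continuous_map_block_code:
  assumes "Y \<subseteq> topspace (full_shift_top A)"
  shows "continuous_map (subtopology (full_shift_top A) Y) (full_shift_top (lang m Y)) (block_code m)"
  unfolding full_shift_top_def[of "lang m Y"] continuous_map_componentwise_UNIV
  using continuous_map_word_at[OF assms] by (simp add: block_code_def)

lemma block_code_shift_by: "block_code m (shift_by (j * int m) x) = shift_by j (block_code m x)"
  by (simp add: block_code_def fun_eq_iff algebra_simps)

lemma shift_block_code: "shift (block_code m x) = block_code m (shift_by (int m) x)"
  using block_code_shift_by[of m 1 x] by (simp add: shift_eq_shift_by)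

lemma word_at_block_code_cong:
  assumes "\<forall>i\<in>{0..<int (n * m)}. x i = y i"
  shows "word_at (block_code m x) 0 n = word_at (block_code m y) 0 n"
  unfolding word_at_eq_iff
proof
  fix k assume "k \<in> {0..<0 + int n}"
  then have "(k + 1) * int m \<le> int n * int m"
    by (intro mult_right_mono) auto
  then have "k * int m + int m \<le> int (n * m)"
    by (simp add: distrib_right)
  moreover have "0 \<le> k * int m"
    using \<open>k \<in> _\<close> by simp
  ultimately have "{k * int m..<k * int m + int m} \<subseteq> {0..<int (n * m)}"
    by auto
  then have "\<forall>i\<in>{k * int m..<k * int m + int m}. x i = y i"
    using assms by blast
  then show "block_code m x k = block_code m y k"
    by (simp add: block_code_def word_at_eq_iff)
qed

section \<open>Invariant measures on subshifts\<close>

lemma subshift_subset_topspace: "subshift A X \<Longrightarrow> X \<subseteq> topspace (full_shift_top A)"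
  by (auto simp: subshift_def closed_invariant_def dest: closedin_subset)

lemma subshift_shift_invariant:
  assumes "subshift A X"
  shows "shift_invariant t X"
proof -
  have "shift_invariant 1 X"
    using assms by (simp add: subshift_def closed_invariant_def shift_invariant_iff_image shift_eq_shift_by)
  then show ?thesis
    using shift_invariant_mult[of 1 X t] by simp
qed

locale invariant_subshift_measure =
  fixes A :: "'a set" and X :: "(int \<Rightarrow> 'a) set" and \<nu> :: "(int \<Rightarrow> 'a) measure"
  assumes subshift: "subshift A X"
    and invariant: "invariant_prob A X \<nu>"
begin

sublocale prob_space \<nu>
  using invariant by (simp add: invariant_prob_def)

lemma space_eq: "space \<nu> = X"
  and sets_eq: "sets \<nu> = sets (borel_of_top (subtopology (full_shift_top A) X))"
  and emeasure_shift_vimage: "B \<in> sets \<nu> \<Longrightarrow> emeasure \<nu> (shift -` B \<inter> X) = emeasure \<nu> B"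
  using invariant by (simp_all add: invariant_prob_def)

lemmas subset_topspace = subshift_subset_topspace[OF subshift]
  and shift_invariant_subshift = subshift_shift_invariant[OF subshift]

lemma openin_in_sets: "openin (subtopology (full_shift_top A) X) U \<Longrightarrow> U \<in> sets \<nu>"
  by (simp add: sets_eq openin_in_borel_of_top)

lemma closedin_in_sets:
  assumes "closedin (full_shift_top A) C" "C \<subseteq> X"
  shows "C \<in> sets \<nu>"
proof -
  have "openin (subtopology (full_shift_top A) X) (X - C)"
    using assms subset_topspace by (auto simp: openin_subtopology closedin_def)
  then have "X - (X - C) \<in> sets \<nu>"
    using openin_in_sets space_eq by (metis sets.compl_sets)
  then show ?thesis
    using assms(2) by (simp add: double_diff)
qed

lemma measurable_shift_by: "shift_by t \<in> measurable \<nu> \<nu>"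
proof -
  have "continuous_map (subtopology (full_shift_top A) X) (subtopology (full_shift_top A) X) (shift_by t)"
    using shift_invariant_subshift[of t]
    by (auto simp: continuous_map_in_subtopology shift_invariant_def
        intro: continuous_map_from_subtopology continuous_map_shift_by)
  then show ?thesis
    using measurable_borel_of_top[OF sets_eq] measurable_cong_sets[OF refl sets_eq] by blast
qed

lemma emeasure_shift_by_vimage:
  assumes "B \<in> sets \<nu>"
  shows "emeasure \<nu> (shift_by (int n) -` B \<inter> X) = emeasure \<nu> B"
proof (induction n)
  case 0
  then show ?case
    using sets.sets_into_space[OF assms] space_eq by (simp add: Int_absorb2)
next
  case (Suc n)
  have "shift_by (int (Suc n)) -` B \<inter> X = shift -` (shift_by (int n) -` B \<inter> X) \<inter> X"
    using shift_invariant_subshift[of 1]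
    by (auto simp: shift_eq_shift_by shift_invariant_def add.commute)
  then have "emeasure \<nu> (shift_by (int (Suc n)) -` B \<inter> X)
      = emeasure \<nu> (shift -` (shift_by (int n) -` B \<inter> X) \<inter> X)"
    by (simp only:)
  also have "\<dots> = emeasure \<nu> (shift_by (int n) -` B \<inter> X)"
    using measurable_sets[OF measurable_shift_by assms] space_eq
    by (intro emeasure_shift_vimage) simp
  also have "\<dots> = emeasure \<nu> B"
    by (rule Suc)
  finally show ?case .
qed

lemma finite_lang_subshift: "finite (lang n X)"
  using subshift subset_topspace by (intro finite_lang) (simp_all add: subshift_def)

lemma measure_cylinder_eq_window:
  "measure \<nu> (cylinder v \<inter> X) = measure \<nu> {z \<in> X. word_at z (- int k) (length v) = v}"
proof -
  let ?G = "{z \<in> X. word_at z (- int k) (length v) = v}"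
  have "?G = {z \<in> topspace (full_shift_top A). word_at z (- int k) (length v) = v} \<inter> X"
    using subset_topspace by blast
  then have "openin (subtopology (full_shift_top A) X) ?G"
    using openin_word_at_fiber[of A "- int k" "length v" v] unfolding openin_subtopology by blast
  then have G_in_sets: "?G \<in> sets \<nu>"
    by (rule openin_in_sets)
  have "shift_by (int k) z \<in> X \<longleftrightarrow> z \<in> X" for z
    using shift_invariant_subshift unfolding shift_invariant_def by blast
  then have "cylinder v \<inter> X = shift_by (int k) -` ?G \<inter> X"
    by (auto simp: cylinder_eq_word_at)
  then have "measure \<nu> (cylinder v \<inter> X) = measure \<nu> (shift_by (int k) -` ?G \<inter> X)"
    by (simp only:)
  also have "\<dots> = measure \<nu> ?G"
    unfolding measure_def emeasure_shift_by_vimage[OF G_in_sets] ..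
  finally show ?thesis .
qed

end

section \<open>Minimal components of a power of the shift\<close>

locale power_component =
  fixes A :: "'a set" and X Xj :: "(int \<Rightarrow> 'a) set" and m :: nat
  assumes minimal: "minimal_subshift A X"
    and m_pos: "m \<ge> 1"
    and component: "minimal_component A (shift ^^ m) X Xj"
begin

lemma subshift: "subshift A X"
  using minimal by (simp add: minimal_subshift_def)

lemma subshift_minimal:
  assumes "W \<subseteq> X" "W \<noteq> {}" "closedin (full_shift_top A) W" "shift_invariant 1 W"
  shows "W = X"
  using minimal assms
  by (simp add: minimal_subshift_def minimal_component_def closed_invariant_def
      shift_invariant_iff_image shift_eq_shift_by)

lemma component_subset: "Xj \<subseteq> X"
  and component_nonempty: "Xj \<noteq> {}"
  and closedin_component: "closedin (full_shift_top A) Xj"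
  and shift_invariant_component: "shift_invariant (int m) Xj"
  using component
  by (auto simp: minimal_component_def closed_invariant_def funpow_shift shift_invariant_iff_image)

lemma component_minimal:
  assumes "W \<subseteq> Xj" "W \<noteq> {}" "closedin (full_shift_top A) W" "shift_invariant (int m) W"
  shows "W = Xj"
  using component assms
  by (simp add: minimal_component_def closed_invariant_def funpow_shift shift_invariant_iff_image)

definition translate :: "int \<Rightarrow> (int \<Rightarrow> 'a) set" where
  "translate i = {y. shift_by i y \<in> Xj}"

lemma translate_subset: "translate i \<subseteq> X"
  using component_subset subshift_shift_invariant[OF subshift, of i]
  by (auto simp: translate_def shift_invariant_def)

lemma closedin_translate: "closedin (full_shift_top A) (translate i)"
  unfolding translate_def by (rule closedin_shift_by_vimage[OF closedin_component])

lemma shift_invariant_translate: "shift_invariant (int m) (translate i)"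
  unfolding shift_invariant_def
proof
  fix y :: "int \<Rightarrow> 'a"
  have "shift_by (int m) (shift_by i y) \<in> Xj \<longleftrightarrow> shift_by i y \<in> Xj"
    using shift_invariant_component unfolding shift_invariant_def by blast
  then show "shift_by (int m) y \<in> translate i \<longleftrightarrow> y \<in> translate i"
    by (simp add: translate_def add.commute)
qed

lemma translate_mod: "translate (i mod int m) = translate i"
proof (rule set_eqI)
  fix y :: "int \<Rightarrow> 'a"
  have "shift_by (i div int m * int m) (shift_by (i mod int m) y) \<in> Xj \<longleftrightarrow> shift_by (i mod int m) y \<in> Xj"
    using shift_invariant_mult[OF shift_invariant_component] unfolding shift_invariant_def by blast
  then show "y \<in> translate (i mod int m) \<longleftrightarrow> y \<in> translate i"
    by (simp add: translate_def)
qed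

lemma Union_translate: "(\<Union>i\<in>{0..<int m}. translate i) = X"
proof -
  have "translate i \<subseteq> (\<Union>i\<in>{0..<int m}. translate i)" for i
  proof -
    have "i mod int m \<in> {0..<int m}"
      using m_pos by simp
    then show ?thesis
      using translate_mod[of i] by blast
  qed
  then have all: "(\<Union>i\<in>{0..<int m}. translate i) = (\<Union>i. translate i)"
    by blast
  have step: "shift_by 1 y \<in> translate i \<longleftrightarrow> y \<in> translate (i + 1)" for y i
    by (simp add: translate_def add.commute)
  have "shift_invariant 1 (\<Union>i. translate i)"
    unfolding shift_invariant_def
  proof (intro allI iffI)
    fix y assume "shift_by 1 y \<in> (\<Union>i. translate i)"
    then show "y \<in> (\<Union>i. translate i)"
      using step by blast
  next
    fix y assume "y \<in> (\<Union>i. translate i)"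
    then obtain j where "y \<in> translate j"
      by blast
    then show "shift_by 1 y \<in> (\<Union>i. translate i)"
      using step[of y "j - 1"] by auto
  qed
  moreover have "closedin (full_shift_top A) (\<Union>i. translate i)"
    unfolding all[symmetric] by (intro closedin_Union) (auto intro: closedin_translate)
  moreover have "translate 0 \<noteq> {}"
    using component_nonempty by (simp add: translate_def)
  ultimately show ?thesis
    unfolding all using translate_subset subshift_minimal[of "\<Union>i. translate i"] by blast
qed

lemma translate_eq_component:
  assumes "translate i \<inter> Xj \<noteq> {}"
  shows "translate i = Xj"
proof -
  have "translate i \<inter> Xj = Xj"
  proof (rule component_minimal)
    show "closedin (full_shift_top A) (translate i \<inter> Xj)"
      using closedin_translate closedin_component by (rule closedin_Int)
    show "shift_invariant (int m) (translate i \<inter> Xj)"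
      using shift_invariant_translate shift_invariant_component by (rule shift_invariant_Int)
  qed (use assms in auto)
  then have Xj_subset: "Xj \<subseteq> translate i"
    by blast
  have "translate (- i) \<subseteq> Xj"
  proof
    fix y assume "y \<in> translate (- i)"
    then have "shift_by (- i) y \<in> Xj"
      by (simp add: translate_def)
    then have "shift_by (- i) y \<in> translate i"
      using Xj_subset by blast
    then show "y \<in> Xj"
      by (simp add: translate_def)
  qed
  moreover obtain x where "x \<in> Xj"
    using component_nonempty by blast
  then have "shift_by i x \<in> translate (- i)"
    by (simp add: translate_def)
  ultimately have "translate (- i) = Xj"
    using closedin_translate shift_invariant_translate by (intro component_minimal) auto
  moreover have "shift_by i y \<in> translate (- i) \<longleftrightarrow> y \<in> Xj" for y
    by (simp add: translate_def)
  ultimately show ?thesis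
    unfolding translate_def by blast
qed

lemma closedin_subshift_diff_component: "closedin (full_shift_top A) (X - Xj)"
proof -
  have "X - Xj = (\<Union>i\<in>{i \<in> {0..<int m}. translate i \<inter> Xj = {}}. translate i)"
    using Union_translate translate_eq_component by blast
  moreover have "finite {i \<in> {0..<int m}. translate i \<inter> Xj = {}}"
    by (rule finite_subset[of _ "{0..<int m}"]) auto
  ultimately show ?thesis
    using closedin_translate by (auto intro: closedin_Union)
qed

definition component_window :: "nat \<Rightarrow> bool" where
  "component_window K \<longleftrightarrow> (\<forall>x\<in>Xj. \<forall>y\<in>X. (\<forall>i\<in>{- int K..int K}. y i = x i) \<longrightarrow> y \<in> Xj)"

lemma ex_component_window: "\<exists>K. component_window K"
proof -
  have "compactin (full_shift_top A) Xj"
    using subshift closedin_component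
    by (auto simp: subshift_def intro: closedin_compact_space compact_space_full_shift_top)
  moreover have "openin (full_shift_top A) (topspace (full_shift_top A) - (X - Xj))"
    using closedin_subshift_diff_component by (simp add: openin_diff)
  moreover have "Xj \<subseteq> topspace (full_shift_top A) - (X - Xj)"
    using closedin_subset[OF closedin_component] by blast
  ultimately obtain K where "\<forall>x\<in>Xj. \<forall>y\<in>topspace (full_shift_top A).
      (\<forall>i\<in>{- int K..int K}. y i = x i) \<longrightarrow> y \<in> topspace (full_shift_top A) - (X - Xj)"
    using compactin_uniform_window by blast
  then show ?thesis
    unfolding component_window_def using subshift_subset_topspace[OF subshift] by blast
qed

end

definition min_cylinder_measure :: "(int \<Rightarrow> 'a) measure \<Rightarrow> (int \<Rightarrow> 'a) set \<Rightarrow> nat \<Rightarrow> real" where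
  "min_cylinder_measure \<mu> Y n = Min ((\<lambda>u. measure \<mu> (cylinder u \<inter> Y)) ` lang n Y)"

lemma boshernitzan_iff:
  "boshernitzan A Y \<longleftrightarrow>
    (\<exists>\<mu>. invariant_prob A Y \<mu> \<and> 0 < limsup (\<lambda>n. ereal (real n * min_cylinder_measure \<mu> Y n)))"
  by (simp add: boshernitzan_def min_cylinder_measure_def Setcompr_eq_image)

lemma min_cylinder_measure_le:
  "finite (lang n Y) \<Longrightarrow> u \<in> lang n Y \<Longrightarrow> min_cylinder_measure \<mu> Y n \<le> measure \<mu> (cylinder u \<inter> Y)"
  unfolding min_cylinder_measure_def by (intro Min_le) auto

section \<open>The block-coded component\<close>

locale power_component_measure = power_component +
  fixes \<nu>
  assumes invariant_measure: "invariant_prob A X \<nu>"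
begin

sublocale nu: invariant_subshift_measure A X \<nu>
  using subshift invariant_measure by unfold_locales

definition coded_component :: "(int \<Rightarrow> 'a list) set" where
  "coded_component = block_code m ` Xj"

abbreviation coded_top :: "(int \<Rightarrow> 'a list) topology" where
  "coded_top \<equiv> subtopology (full_shift_top (lang m X)) coded_component"

definition coded_measure :: "(int \<Rightarrow> 'a list) measure" where
  "coded_measure =
    distr (restrict_space (uniform_measure \<nu> Xj) Xj) (borel_of_top coded_top) (block_code m)"

lemma component_in_sets: "Xj \<in> sets \<nu>"
  using closedin_component component_subset by (rule nu.closedin_in_sets)

lemma emeasure_translate: "i \<ge> 0 \<Longrightarrow> emeasure \<nu> (translate i) = emeasure \<nu> Xj"
proof -
  assume "i \<ge> 0"
  then have "translate i = shift_by (int (nat i)) -` Xj \<inter> X"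
    using translate_subset by (auto simp: translate_def)
  then show ?thesis
    using nu.emeasure_shift_by_vimage[OF component_in_sets, of "nat i"] by simp
qed

lemma emeasure_component_nonzero: "emeasure \<nu> Xj \<noteq> 0"
proof
  assume null: "emeasure \<nu> Xj = 0"
  have "1 = emeasure \<nu> (\<Union>i\<in>{0..<int m}. translate i)"
    using Union_translate nu.emeasure_space_1 nu.space_eq by simp
  also have "\<dots> \<le> (\<Sum>i\<in>{0..<int m}. emeasure \<nu> (translate i))"
    using closedin_translate translate_subset
    by (intro emeasure_subadditive_finite) (auto intro: nu.closedin_in_sets)
  also have "\<dots> = 0"
    using emeasure_translate null by simp
  finally show False
    by simp
qed

lemma coded_component_subset: "coded_component \<subseteq> topspace (full_shift_top (lang m X))"
  using component_subset
  by (auto simp: coded_component_def block_code_def topspace_full_shift_top lang_def)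

lemma shift_coded_component: "y \<in> coded_component \<Longrightarrow> shift y \<in> coded_component"
  using shift_invariant_component
  by (auto simp: coded_component_def shift_block_code shift_invariant_def)

lemma block_code_vimage_openin_in_sets:
  assumes "openin (full_shift_top (lang m X)) V"
  shows "block_code m -` V \<inter> Xj \<in> sets \<nu>"
proof -
  let ?W = "{x \<in> topspace (subtopology (full_shift_top A) X). block_code m x \<in> V}"
  have "openin (subtopology (full_shift_top A) X) ?W"
    using openin_continuous_map_preimage[OF continuous_map_block_code[OF nu.subset_topspace] assms] .
  then have "?W \<in> sets \<nu>"
    by (rule nu.openin_in_sets)
  moreover have "block_code m -` V \<inter> Xj = ?W \<inter> Xj"
    using component_subset nu.subset_topspace by auto
  ultimately show ?thesis
    using component_in_sets by simp
qed

lemma component_in_sets_uniform: "Xj \<inter> space (uniform_measure \<nu> Xj) \<in> sets (uniform_measure \<nu> Xj)"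
  using component_in_sets component_subset nu.space_eq by (simp add: Int_absorb2)

lemma space_restrict_uniform: "space (restrict_space (uniform_measure \<nu> Xj) Xj) = Xj"
  using component_subset nu.space_eq by (auto simp: space_restrict_space)

lemma measurable_block_code:
  "block_code m \<in> measurable (restrict_space (uniform_measure \<nu> Xj) Xj) (borel_of_top coded_top)"
proof -
  let ?M = "restrict_space (uniform_measure \<nu> Xj) Xj"
  note space_M = space_restrict_uniform
  have "block_code m \<in> measurable ?M (sigma (topspace coded_top) {U. openin coded_top U})"
  proof (rule measurable_measure_of)
    show "{U. openin coded_top U} \<subseteq> Pow (topspace coded_top)"
      using openin_subset[of coded_top] by blast
    show "block_code m \<in> space ?M \<rightarrow> topspace coded_top"
      using space_M coded_component_subset by (auto simp: coded_component_def)
    fix U assume "U \<in> {U. openin coded_top U}"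
    then obtain V where V: "openin (full_shift_top (lang m X)) V" "U = V \<inter> coded_component"
      by (auto simp: openin_subtopology)
    then have "block_code m -` U \<inter> space ?M = block_code m -` V \<inter> Xj"
      using space_M by (auto simp: coded_component_def)
    then show "block_code m -` U \<inter> space ?M \<in> sets ?M"
      using block_code_vimage_openin_in_sets[OF V(1)] component_in_sets_uniform
      by (simp add: sets_restrict_space_iff)
  qed
  then show ?thesis
    unfolding borel_of_top_def .
qed

lemma block_code_vimage_in_sets:
  assumes "B \<in> sets (borel_of_top coded_top)"
  shows "block_code m -` B \<inter> Xj \<in> sets (restrict_space (uniform_measure \<nu> Xj) Xj)"
    and "block_code m -` B \<inter> Xj \<in> sets \<nu>"
proof -
  show *: "block_code m -` B \<inter> Xj \<in> sets (restrict_space (uniform_measure \<nu> Xj) Xj)"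
    using measurable_sets[OF measurable_block_code assms] by (simp add: space_restrict_uniform)
  then show "block_code m -` B \<inter> Xj \<in> sets \<nu>"
    using component_in_sets_uniform by (simp add: sets_restrict_space_iff)
qed

lemma emeasure_coded_measure:
  assumes "B \<in> sets (borel_of_top coded_top)"
  shows "emeasure coded_measure B = emeasure \<nu> (block_code m -` B \<inter> Xj) / emeasure \<nu> Xj"
proof -
  have "emeasure coded_measure B
      = emeasure (restrict_space (uniform_measure \<nu> Xj) Xj) (block_code m -` B \<inter> Xj)"
    unfolding coded_measure_def
    by (simp add: emeasure_distr[OF measurable_block_code assms] space_restrict_uniform)
  also have "\<dots> = emeasure (uniform_measure \<nu> Xj) (block_code m -` B \<inter> Xj)"
    using component_in_sets_uniform by (intro emeasure_restrict_space) auto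
  also have "\<dots> = emeasure \<nu> (block_code m -` B \<inter> Xj) / emeasure \<nu> Xj"
    using block_code_vimage_in_sets(2)[OF assms] component_in_sets
    by (simp add: Int_absorb1)
  finally show ?thesis .
qed

lemma measure_coded_measure:
  assumes "B \<in> sets (borel_of_top coded_top)"
  shows "measure coded_measure B = measure \<nu> (block_code m -` B \<inter> Xj) / measure \<nu> Xj"
proof -
  have "measure coded_measure B
      = measure (restrict_space (uniform_measure \<nu> Xj) Xj) (block_code m -` B \<inter> Xj)"
    unfolding coded_measure_def
    by (simp add: measure_distr[OF measurable_block_code assms] space_restrict_uniform)
  also have "\<dots> = measure (uniform_measure \<nu> Xj) (block_code m -` B \<inter> Xj)"
    using component_in_sets_uniform by (intro measure_restrict_space) auto
  also have "\<dots> = measure \<nu> (block_code m -` B \<inter> Xj) / measure \<nu> Xj"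
    using block_code_vimage_in_sets(2)[OF assms] emeasure_component_nonzero
    by (simp add: Int_absorb1)
  finally show ?thesis .
qed

lemma prob_space_coded_measure: "prob_space coded_measure"
proof -
  have "prob_space (restrict_space (uniform_measure \<nu> Xj) Xj)"
    using component_in_sets
    by (intro prob_space_restrict_space emeasure_uniform_measure_1 emeasure_component_nonzero) simp_all
  then show ?thesis
    unfolding coded_measure_def using measurable_block_code by (rule prob_space.prob_space_distr)
qed

lemma measurable_shift_coded: "shift \<in> measurable (borel_of_top coded_top) (borel_of_top coded_top)"
proof (rule measurable_borel_of_top[OF refl])
  show "continuous_map coded_top coded_top shift"
    unfolding continuous_map_in_subtopology shift_eq_shift_by
    using shift_coded_component
    by (auto intro: continuous_map_from_subtopology continuous_map_shift_by simp: shift_eq_shift_by)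
qed

lemma invariant_prob_coded_measure: "invariant_prob (lang m X) coded_component coded_measure"
  unfolding invariant_prob_def
proof (intro conjI ballI)
  show "prob_space coded_measure"
    by (rule prob_space_coded_measure)
  show "space coded_measure = coded_component"
    using coded_component_subset by (auto simp: coded_measure_def)
  show "sets coded_measure = sets (borel_of_top coded_top)"
    by (simp add: coded_measure_def)
  fix B assume "B \<in> sets coded_measure"
  then have B: "B \<in> sets (borel_of_top coded_top)"
    by (simp add: coded_measure_def)
  then have shift_B: "shift -` B \<inter> coded_component \<in> sets (borel_of_top coded_top)"
    using measurable_sets[OF measurable_shift_coded] by (simp add: Int_absorb1[OF coded_component_subset])
  have "block_code m -` (shift -` B \<inter> coded_component) \<inter> Xj
      = shift_by (int m) -` (block_code m -` B \<inter> Xj) \<inter> X"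
  proof (rule set_eqI)
    fix x
    have "x \<in> Xj \<longleftrightarrow> x \<in> X \<and> shift_by (int m) x \<in> Xj"
      using shift_invariant_component component_subset unfolding shift_invariant_def by blast
    moreover have "x \<in> Xj \<Longrightarrow> block_code m x \<in> coded_component"
      by (simp add: coded_component_def)
    ultimately show "x \<in> block_code m -` (shift -` B \<inter> coded_component) \<inter> Xj
        \<longleftrightarrow> x \<in> shift_by (int m) -` (block_code m -` B \<inter> Xj) \<inter> X"
      by (auto simp: shift_block_code)
  qed
  then have "emeasure coded_measure (shift -` B \<inter> coded_component)
      = emeasure \<nu> (shift_by (int m) -` (block_code m -` B \<inter> Xj) \<inter> X) / emeasure \<nu> Xj"
    by (simp only: emeasure_coded_measure[OF shift_B])
  also have "\<dots> = emeasure \<nu> (block_code m -` B \<inter> Xj) / emeasure \<nu> Xj"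
    by (simp only: nu.emeasure_shift_by_vimage[OF block_code_vimage_in_sets(2)[OF B]])
  also have "\<dots> = emeasure coded_measure B"
    by (simp only: emeasure_coded_measure[OF B])
  finally show "emeasure coded_measure (shift -` B \<inter> coded_component) = emeasure coded_measure B" .
qed

lemma measure_component_pos: "0 < measure \<nu> Xj"
proof -
  have "measure \<nu> Xj \<noteq> 0"
    using emeasure_component_nonzero nu.emeasure_eq_measure[of Xj] by simp
  then show ?thesis
    using measure_nonneg[of \<nu> Xj] by linarith
qed

lemma cylinder_coded_in_sets: "cylinder U \<inter> coded_component \<in> sets (borel_of_top coded_top)"
proof -
  have "cylinder U \<inter> coded_component
      = {y \<in> topspace (full_shift_top (lang m X)). word_at y 0 (length U) = U} \<inter> coded_component"
    using coded_component_subset by (auto simp: cylinder_eq_word_at)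
  then have "openin coded_top (cylinder U \<inter> coded_component)"
    using openin_word_at_fiber[of "lang m X" 0 "length U" U] unfolding openin_subtopology by blast
  then show ?thesis
    by (rule openin_in_borel_of_top)
qed

section \<open>Comparison of cylinder measures\<close>

text \<open>A cylinder of length \<open>n\<close> in the coded system is the image of a cylinder of length \<open>n m\<close>
  in \<open>Xj\<close>, and widening that window by \<open>K\<close> on both sides turns it into a cylinder of \<open>X\<close> that
  lies entirely inside \<open>Xj\<close>.\<close>

lemma measure_cylinder_le_coded:
  assumes window: "component_window K"
    and U: "U \<in> lang n coded_component" and L: "n * m + 2 * K < L"
  shows "\<exists>v\<in>lang L X. measure \<nu> (cylinder v \<inter> X) \<le> measure coded_measure (cylinder U \<inter> coded_component)"
proof -
  obtain x0 j where x0: "x0 \<in> Xj" and U_eq: "U = word_at (block_code m x0) j n"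
    using U by (auto simp: lang_def coded_component_def)
  define x where "x = shift_by (j * int m) x0"
  have x: "x \<in> Xj"
    using shift_invariant_mult[OF shift_invariant_component, of j] x0
    by (simp add: x_def shift_invariant_def)
  have U_x: "U = word_at (block_code m x) 0 n"
    by (simp add: U_eq x_def block_code_shift_by)
  define v where "v = word_at x (- int K) L"
  let ?G = "{z \<in> X. word_at z (- int K) L = v}"
  let ?E = "block_code m -` (cylinder U \<inter> coded_component) \<inter> Xj"
  have L_int: "int n * int m + 2 * int K < int L"
    using L by (metis of_nat_add of_nat_less_iff of_nat_mult of_nat_numeral)
  have "?G \<subseteq> ?E"
  proof
    fix z assume z: "z \<in> ?G"
    then have agree: "\<forall>i\<in>{- int K..<- int K + int L}. z i = x i"
      by (simp add: v_def word_at_eq_iff)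
    have "0 \<le> int n * int m"
      by simp
    then have "2 * int K < int L"
      using L_int by linarith
    then have "{- int K..int K} \<subseteq> {- int K..<- int K + int L}"
      by auto
    then have "z \<in> Xj"
      using window x z agree unfolding component_window_def by blast
    moreover have "word_at (block_code m z) 0 n = U"
      unfolding U_x using agree L_int by (intro word_at_block_code_cong) auto
    ultimately show "z \<in> ?E"
      using U_x by (auto simp: cylinder_eq_word_at coded_component_def)
  qed
  have "measure \<nu> (cylinder v \<inter> X) = measure \<nu> ?G"
    using nu.measure_cylinder_eq_window[of v K] by (simp add: v_def)
  also have "\<dots> \<le> measure \<nu> ?E"
    using \<open>?G \<subseteq> ?E\<close> block_code_vimage_in_sets(2)[OF cylinder_coded_in_sets]
    by (intro nu.finite_measure_mono)
  also have "\<dots> \<le> measure \<nu> ?E / measure \<nu> Xj"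
    using measure_component_pos nu.prob_le_1 by (simp add: le_divide_eq mult_left_le)
  also have "\<dots> = measure coded_measure (cylinder U \<inter> coded_component)"
    by (rule measure_coded_measure[OF cylinder_coded_in_sets, symmetric])
  finally have "measure \<nu> (cylinder v \<inter> X) \<le> measure coded_measure (cylinder U \<inter> coded_component)" .
  moreover have "v \<in> lang L X"
    using x component_subset by (auto simp: v_def lang_def)
  ultimately show ?thesis
    by blast
qed

lemma finite_lang_coded: "finite (lang n coded_component)"
  using finite_lang[OF nu.finite_lang_subshift coded_component_subset] .

lemma min_cylinder_measure_le_coded:
  assumes window: "component_window K"
    and L: "n * m + 2 * K < L"
  shows "min_cylinder_measure \<nu> X L \<le> min_cylinder_measure coded_measure coded_component n"
proof -
  have "min_cylinder_measure \<nu> X L \<le> measure coded_measure (cylinder U \<inter> coded_component)"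
    if U: "U \<in> lang n coded_component" for U
  proof -
    obtain v where v: "v \<in> lang L X"
      "measure \<nu> (cylinder v \<inter> X) \<le> measure coded_measure (cylinder U \<inter> coded_component)"
      using measure_cylinder_le_coded[OF window U L] by blast
    show ?thesis
      using min_cylinder_measure_le[OF nu.finite_lang_subshift v(1), of \<nu>] v(2) by linarith
  qed
  moreover have "lang n coded_component \<noteq> {}"
    using component_nonempty by (intro lang_nonempty) (simp add: coded_component_def)
  ultimately show ?thesis
    unfolding min_cylinder_measure_def[of coded_measure] using finite_lang_coded
    by (simp add: Min_ge_iff)
qed

end

section \<open>Transfer of the Boshernitzan condition\<close>

lemma limsup_pos_iff_frequently:
  fixes f :: "nat \<Rightarrow> real"
  shows "0 < limsup (\<lambda>n. ereal (f n)) \<longleftrightarrow> (\<exists>c>0. \<exists>\<^sub>F n in sequentially. c \<le> f n)"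
proof
  assume "0 < limsup (\<lambda>n. ereal (f n))"
  then obtain y where "0 < y" "\<not> (\<forall>\<^sub>F n in sequentially. ereal (f n) < y)"
    using Limsup_le_iff[of sequentially "\<lambda>n. ereal (f n)" 0] by (auto simp: not_le)
  then have "\<exists>\<^sub>F n in sequentially. y \<le> ereal (f n)"
    by (simp add: not_eventually not_less)
  moreover obtain c where "0 < ereal c" "ereal c < y"
    using ereal_dense2[OF \<open>0 < y\<close>] by blast
  moreover have "c \<le> f n" if "y \<le> ereal (f n)" for n
    using \<open>ereal c < y\<close> that by (metis ereal_less_eq(3) less_imp_le order_trans)
  ultimately have "\<exists>\<^sub>F n in sequentially. c \<le> f n"
    by (auto elim!: frequently_elim1)
  then show "\<exists>c>0. \<exists>\<^sub>F n in sequentially. c \<le> f n"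
    using \<open>0 < ereal c\<close> by auto
next
  assume "\<exists>c>0. \<exists>\<^sub>F n in sequentially. c \<le> f n"
  then obtain c where c: "0 < c" "\<exists>\<^sub>F n in sequentially. c \<le> f n"
    by blast
  show "0 < limsup (\<lambda>n. ereal (f n))"
  proof (rule ccontr)
    assume "\<not> 0 < limsup (\<lambda>n. ereal (f n))"
    then have "\<forall>y>0. \<forall>\<^sub>F n in sequentially. ereal (f n) < y"
      using Limsup_le_iff[of sequentially "\<lambda>n. ereal (f n)" 0] by (simp add: not_less)
    then have "\<forall>\<^sub>F n in sequentially. ereal (f n) < ereal c"
      using c(1) by (metis zero_less_real_of_ereal real_of_ereal.simps(1))
    then have "\<exists>\<^sub>F n in sequentially. c \<le> f n \<and> f n < c"
      by (simp add: frequently_eventually_frequently[OF c(2)])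
    then have "\<exists>\<^sub>F n in sequentially. False"
      by (rule frequently_elim1) linarith
    then show False
      by simp
  qed
qed

text \<open>Given \<open>N\<close>, take \<open>n = (N - k) div m\<close>; then \<open>N \<le> 2 n m\<close> once \<open>N\<close> is large.\<close>

lemma limsup_pos_transfer:
  fixes a b :: "nat \<Rightarrow> real" and m k :: nat
  assumes m: "m > 0" and le: "\<And>n N. n * m + k \<le> N \<Longrightarrow> a N \<le> b n"
    and pos: "0 < limsup (\<lambda>N. ereal (real N * a N))"
  shows "0 < limsup (\<lambda>n. ereal (real n * b n))"
proof -
  obtain c where c: "0 < c" and freq: "\<exists>\<^sub>F N in sequentially. c \<le> real N * a N"
    using pos by (auto simp: limsup_pos_iff_frequently)
  have "\<exists>n\<ge>n0. c / (2 * real m) \<le> real n * b n" for n0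
  proof -
    obtain N where N: "N \<ge> m * n0 + 2 * k + 2 * m" "c \<le> real N * a N"
      using freq by (auto simp: frequently_sequentially)
    define n where "n = (N - k) div m"
    have n_le: "n * m \<le> N - k"
      by (simp add: n_def div_times_less_eq_dividend)
    have n_gt: "N - k < n * m + m"
      using m by (simp add: n_def) (metis add.commute div_mult_mod_eq add_less_cancel_left mod_less_divisor)
    have "n0 \<le> n"
      using m N(1) div_le_mono[of "m * n0" "N - k" m] by (simp add: n_def)
    have "N \<le> 2 * (n * m)"
      using N(1) n_gt by linarith
    then have "real N \<le> real (2 * (n * m))"
      by (simp only: of_nat_le_iff)
    then have N_le: "real N \<le> 2 * real m * real n"
      by (simp add: ac_simps)
    have "0 < a N"
    proof (rule ccontr)
      assume "\<not> 0 < a N"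
      then have "real N * a N \<le> 0"
        by (simp add: mult_nonneg_nonpos)
      then show False
        using c N(2) by linarith
    qed
    have "c \<le> 2 * real m * (real n * a N)"
      using N(2) mult_right_mono[OF N_le less_imp_le[OF \<open>0 < a N\<close>]] by (simp add: ac_simps)
    also have "\<dots> \<le> 2 * real m * (real n * b n)"
      using le[of n N] n_le N(1) by (intro mult_left_mono) auto
    finally show ?thesis
      using m \<open>n0 \<le> n\<close> by (intro exI[of _ n]) (simp add: field_simps)
  qed
  then have "\<exists>\<^sub>F n in sequentially. c / (2 * real m) \<le> real n * b n"
    by (simp add: frequently_sequentially)
  moreover have "0 < c / (2 * real m)"
    using c m by simp
  ultimately show ?thesis
    unfolding limsup_pos_iff_frequently by blast
qed

theorem lemma3p11:
  fixes A :: "'b set" and X Xj :: "(int \<Rightarrow> 'b) set" and m :: nat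
  assumes "minimal_subshift A X"
    and "boshernitzan A X"
    and "m \<ge> 1"
    and "minimal_component A (shift ^^ m) X Xj"
  shows "boshernitzan (lang m X) (block_code m ` Xj)"
proof -
  obtain \<nu> where invariant: "invariant_prob A X \<nu>"
    and pos: "0 < limsup (\<lambda>n. ereal (real n * min_cylinder_measure \<nu> X n))"
    using assms(2) by (auto simp: boshernitzan_iff)
  interpret power_component_measure A X Xj m \<nu>
    using assms(1,3,4) invariant by unfold_locales
  obtain K where "component_window K"
    using ex_component_window by blast
  then have "min_cylinder_measure \<nu> X N \<le> min_cylinder_measure coded_measure coded_component n"
    if "n * m + (2 * K + 1) \<le> N" for n N
    using that by (intro min_cylinder_measure_le_coded) auto
  then have "0 < limsup (\<lambda>n. ereal (real n * min_cylinder_measure coded_measure coded_component n))"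
    using m_pos by (intro limsup_pos_transfer[where m = m and k = "2 * K + 1", OF _ _ pos]) auto
  then show ?thesis
    using invariant_prob_coded_measure by (auto simp: boshernitzan_iff coded_component_def)
qed

end
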